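(* Let $(A;R)\in\mathcal C$, let $t:R\to A$ be a transversal with image $A\setminus Y$, and work in the matroid $PG(A;R)$. For each closed set $F$ let $\beta(F)=|\{x\in F\setminus Y: \mathrm{cl}(t^{-1}(x))=F\}|$. Then $\beta(F)=\alpha(F)$ for every closed set $F$ of $PG(A;R)$.
   Context: A set system is a pair $(A;R)$ where $R$ is a set of finite non-empty subsets of $A$; for $X\subseteq A$, $R[X]=\{r\in R: r\subseteq X\}$ and $\delta(X)=|X|-|R[X]|$. $\mathcal C$ is the class of finite set systems with $\delta(X)\ge0$ for all $X\subseteq A$. For $(A;R)\in\mathcal C$ define $d(X)=\min\{\delta(Y):X\subseteq Y\subseteq A\}$ and $\mathrm{cl}(X)=\{y: d(X\cup\{y\})=d(X)\}$; $PG(A;R)$ is the matroid $(A,\mathrm{cl})$ with rank function $d$. A transversal is an injective $t:R\to A$ with $t(r)\in r$ for all $r$. A closed set is $F$ with $\mathrm{cl}(F)=F$. The $\alpha$-function of a matroid is defined on unions of closed sets $X$ recursively by $\alpha(X)=|X|-d(X)-\sum_G\alpha(G)$, the sum over closed $G\subsetneq X$. *)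

theory Defs
  imports Main
begin

definition set_system :: "'a set \<Rightarrow> 'a set set \<Rightarrow> bool" where
  "set_system A R \<longleftrightarrow> (\<forall>r\<in>R. finite r \<and> r \<noteq> {} \<and> r \<subseteq> A)"

definition relsIn :: "'a set set \<Rightarrow> 'a set \<Rightarrow> 'a set set" where
  "relsIn R X = {r\<in>R. r \<subseteq> X}"

definition delta :: "'a set set \<Rightarrow> 'a set \<Rightarrow> int" where
  "delta R X = int (card X) - int (card (relsIn R X))"

definition classC :: "'a set \<Rightarrow> 'a set set \<Rightarrow> bool" where
  "classC A R \<longleftrightarrow> finite A \<and> set_system A R \<and> (\<forall>X\<subseteq>A. delta R X \<ge> 0)"

definition dd :: "'a set \<Rightarrow> 'a set set \<Rightarrow> 'a set \<Rightarrow> int" where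
  "dd A R X = Min (delta R ` {Y. X \<subseteq> Y \<and> Y \<subseteq> A})"

definition cl :: "'a set \<Rightarrow> 'a set set \<Rightarrow> 'a set \<Rightarrow> 'a set" where
  "cl A R X = {y\<in>A. dd A R (X \<union> {y}) = dd A R X}"

definition closed :: "'a set \<Rightarrow> 'a set set \<Rightarrow> 'a set \<Rightarrow> bool" where
  "closed A R F \<longleftrightarrow> cl A R F = F"

definition transversal :: "'a set \<Rightarrow> 'a set set \<Rightarrow> ('a set \<Rightarrow> 'a) \<Rightarrow> bool" where
  "transversal A R t \<longleftrightarrow> inj_on t R \<and> (\<forall>r\<in>R. t r \<in> r)"

function alpha :: "'a set \<Rightarrow> 'a set set \<Rightarrow> 'a set \<Rightarrow> int" where
  "alpha A R X =
     (if finite X then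
        int (card X) - dd A R X - (\<Sum>G\<in>{G. G \<subset> X \<and> closed A R G}. alpha A R G)
      else 0)"
  by pat_completeness auto
termination
  by (relation "measure (\<lambda>(A, R, X). card X)") (auto intro: psubset_card_mono)

definition beta :: "'a set \<Rightarrow> 'a set set \<Rightarrow> ('a set \<Rightarrow> 'a) \<Rightarrow> 'a set \<Rightarrow> 'a set \<Rightarrow> nat" where
  "beta A R t Y F = card {x \<in> F - Y. cl A R (the_inv_into R t x) = F}"

end

theory Submission
  imports Defs
begin

(* Call a set Y with X \<subseteq> Y \<subseteq> A and delta(Y) = d(X) tight for X.
   Since delta is submodular, the tight sets for X are closed under union, so
   there is a largest one, and it is exactly cl(X).  From this description we
   get the matroid facts needed: cl is extensive, monotone and idempotent, and
   every closed F satisfies delta(F) = d(F), i.e. |F| - d(F) = |R[F]|.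
   Grouping the sets r \<in> R[F] by their closure cl(r), which is a closed
   subset of F, gives |R[F]| = \<Sum> beta(G) over closed G \<subseteq> F, because the
   transversal t is a bijection between {r \<in> R. cl(r) = G} and the set counted
   by beta(G).  The recursion defining alpha then shows beta = alpha by strong
   induction on |F|. *)

section \<open>Submodularity of delta\<close>

lemma finite_relsIn: "finite X \<Longrightarrow> finite (relsIn R X)"
  unfolding relsIn_def by (rule finite_subset[of _ "Pow X"]) auto

(* |X| is modular and X \<mapsto> |R[X]| is supermodular, hence delta is submodular. *)
lemma delta_submodular:
  assumes "finite X" and "finite Z"
  shows "delta R (X \<union> Z) + delta R (X \<inter> Z) \<le> delta R X + delta R Z"
proof -
  have card_XZ: "card (X \<union> Z) + card (X \<inter> Z) = card X + card Z"
    using card_Un_Int assms by metis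
  have rels_Int: "relsIn R (X \<inter> Z) = relsIn R X \<inter> relsIn R Z"
    and rels_Un: "relsIn R X \<union> relsIn R Z \<subseteq> relsIn R (X \<union> Z)"
    unfolding relsIn_def by auto
  have fin: "finite (relsIn R X)" "finite (relsIn R Z)" "finite (relsIn R (X \<union> Z))"
    using assms by (simp_all add: finite_relsIn)
  have "card (relsIn R X) + card (relsIn R Z)
        = card (relsIn R X \<union> relsIn R Z) + card (relsIn R (X \<inter> Z))"
    using card_Un_Int[OF fin(1,2)] rels_Int by simp
  also have "\<dots> \<le> card (relsIn R (X \<union> Z)) + card (relsIn R (X \<inter> Z))"
    using card_mono[OF fin(3) rels_Un] by simp
  finally show ?thesis unfolding delta_def using card_XZ by linarith
qed

section \<open>The rank function d\<close>

lemma finite_supersets: "finite A \<Longrightarrow> finite {Y. X \<subseteq> Y \<and> Y \<subseteq> A}"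
  by (rule finite_subset[of _ "Pow A"]) auto

lemma dd_le_delta:
  assumes "finite A" and "X \<subseteq> Y" and "Y \<subseteq> A"
  shows "dd A R X \<le> delta R Y"
  unfolding dd_def using assms by (intro Min_le) (auto intro: finite_supersets)

definition tight :: "'a set \<Rightarrow> 'a set set \<Rightarrow> 'a set \<Rightarrow> 'a set set" where
  "tight A R X = {Y. X \<subseteq> Y \<and> Y \<subseteq> A \<and> delta R Y = dd A R X}"

lemma finite_tight: "finite A \<Longrightarrow> finite (tight A R X)"
  unfolding tight_def by (rule finite_subset[of _ "Pow A"]) auto

lemma tight_nonempty:
  assumes "finite A" and "X \<subseteq> A"
  shows "tight A R X \<noteq> {}"
proof -
  have "dd A R X \<in> delta R ` {Y. X \<subseteq> Y \<and> Y \<subseteq> A}"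
    unfolding dd_def using assms by (intro Min_in) (auto intro: finite_supersets)
  then obtain Y where "X \<subseteq> Y" "Y \<subseteq> A" "delta R Y = dd A R X" by auto
  then show ?thesis unfolding tight_def by blast
qed

(* d is monotone: enlarging X shrinks the family over which the minimum is taken. *)
lemma dd_mono:
  assumes "finite A" and "X \<subseteq> X'" and "X' \<subseteq> A"
  shows "dd A R X \<le> dd A R X'"
proof -
  obtain Y where "Y \<in> tight A R X'" using tight_nonempty[OF assms(1,3)] by blast
  then have "X' \<subseteq> Y" "Y \<subseteq> A" "delta R Y = dd A R X'" unfolding tight_def by auto
  then show ?thesis using dd_le_delta[OF assms(1), of X Y R] assms(2) by simp
qed

lemma tight_union:
  assumes A: "finite A"
    and Y1: "Y1 \<in> tight A R X1" and Y2: "Y2 \<in> tight A R X2" and X1: "X1 \<subseteq> Y2"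
  shows "Y1 \<union> Y2 \<in> tight A R X2"
proof -
  have Y1': "X1 \<subseteq> Y1" "Y1 \<subseteq> A" "delta R Y1 = dd A R X1"
    and Y2': "X2 \<subseteq> Y2" "Y2 \<subseteq> A" "delta R Y2 = dd A R X2"
    using Y1 Y2 unfolding tight_def by auto
  have "delta R (Y1 \<union> Y2) + delta R (Y1 \<inter> Y2) \<le> delta R Y1 + delta R Y2"
    using delta_submodular Y1'(2) Y2'(2) A finite_subset by metis
  moreover have "delta R Y1 \<le> delta R (Y1 \<inter> Y2)"
    using dd_le_delta[OF A, of X1 "Y1 \<inter> Y2"] Y1' X1 by auto
  moreover have "dd A R X2 \<le> delta R (Y1 \<union> Y2)"
    using dd_le_delta[OF A, of X2 "Y1 \<union> Y2"] Y1' Y2' by auto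
  ultimately show ?thesis using Y1' Y2' unfolding tight_def by auto
qed

section \<open>The closure operator\<close>

lemma Union_mem_if_union_closed:
  assumes "finite S" and "S \<noteq> {}" and "S \<subseteq> \<S>"
    and "\<And>U V. U \<in> \<S> \<Longrightarrow> V \<in> \<S> \<Longrightarrow> U \<union> V \<in> \<S>"
  shows "\<Union>S \<in> \<S>"
  using assms by (induction S rule: finite_ne_induct) auto

lemma cl_eq_Union_tight:
  assumes A: "finite A" and X: "X \<subseteq> A"
  shows "cl A R X = \<Union>(tight A R X)"
proof
  show "cl A R X \<subseteq> \<Union>(tight A R X)"
  proof
    fix y assume "y \<in> cl A R X"
    then have "y \<in> A" and "dd A R (X \<union> {y}) = dd A R X" unfolding cl_def by auto
    moreover obtain Y where "Y \<in> tight A R (X \<union> {y})"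
      using tight_nonempty[OF A, of "X \<union> {y}"] X \<open>y \<in> A\<close> by auto
    ultimately show "y \<in> \<Union>(tight A R X)" unfolding tight_def by auto
  qed
  show "\<Union>(tight A R X) \<subseteq> cl A R X"
  proof
    fix y assume "y \<in> \<Union>(tight A R X)"
    then obtain Y where Y: "X \<subseteq> Y" "Y \<subseteq> A" "delta R Y = dd A R X" "y \<in> Y"
      unfolding tight_def by auto
    have "dd A R (X \<union> {y}) \<le> dd A R X" using dd_le_delta[OF A, of "X \<union> {y}" Y R] Y by auto
    moreover have "dd A R X \<le> dd A R (X \<union> {y})" using dd_mono[OF A, of X "X \<union> {y}"] Y by auto
    ultimately show "y \<in> cl A R X" unfolding cl_def using Y by auto
  qed
qed

lemma cl_tight:
  assumes A: "finite A" and X: "X \<subseteq> A"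
  shows "cl A R X \<in> tight A R X"
proof -
  have union_closed: "U \<union> V \<in> tight A R X" if "U \<in> tight A R X" "V \<in> tight A R X" for U V
    by (rule tight_union[OF A that]) (use that(2) in \<open>simp add: tight_def\<close>)
  show ?thesis
    unfolding cl_eq_Union_tight[OF A X]
    by (rule Union_mem_if_union_closed[OF finite_tight[OF A] tight_nonempty[OF A X] order_refl
          union_closed])
qed

lemma cl_subset: "cl A R X \<subseteq> A"
  unfolding cl_def by auto

lemma subset_cl:
  assumes "finite A" and "X \<subseteq> A"
  shows "X \<subseteq> cl A R X"
  using cl_tight[OF assms] unfolding tight_def by blast

lemma dd_cl:
  assumes A: "finite A" and X: "X \<subseteq> A"
  shows "dd A R (cl A R X) = dd A R X"
proof -
  have "delta R (cl A R X) = dd A R X" using cl_tight[OF A X] unfolding tight_def by blast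
  moreover have "dd A R (cl A R X) \<le> delta R (cl A R X)"
    by (rule dd_le_delta[OF A order_refl cl_subset])
  moreover have "dd A R X \<le> dd A R (cl A R X)"
    by (rule dd_mono[OF A subset_cl[OF A X] cl_subset])
  ultimately show ?thesis by linarith
qed

(* cl is monotone: cl(X1) can be joined to the tight set cl(X2) for X2. *)
lemma cl_mono:
  assumes A: "finite A" and X12: "X1 \<subseteq> X2" and X2: "X2 \<subseteq> A"
  shows "cl A R X1 \<subseteq> cl A R X2"
proof -
  have X1: "X1 \<subseteq> A" and "X1 \<subseteq> cl A R X2" using X12 X2 subset_cl[OF A X2] by auto
  then have "cl A R X1 \<union> cl A R X2 \<in> tight A R X2"
    by (intro tight_union[OF A cl_tight[OF A X1] cl_tight[OF A X2]])
  then show ?thesis using cl_eq_Union_tight[OF A X2] by blast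
qed

(* cl is idempotent: every tight set for cl(X) is already tight for X. *)
lemma closed_cl:
  assumes A: "finite A" and X: "X \<subseteq> A"
  shows "closed A R (cl A R X)"
proof -
  have "tight A R (cl A R X) \<subseteq> tight A R X"
    using dd_cl[OF A X] subset_cl[OF A X] unfolding tight_def by auto
  then have "\<Union>(tight A R (cl A R X)) \<subseteq> \<Union>(tight A R X)" by blast
  then have "cl A R (cl A R X) \<subseteq> cl A R X"
    by (simp only: cl_eq_Union_tight[OF A cl_subset[of A R X], symmetric]
        cl_eq_Union_tight[OF A X, symmetric])
  then show ?thesis unfolding closed_def using subset_cl[OF A cl_subset] by blast
qed

lemma closed_subset: "closed A R F \<Longrightarrow> F \<subseteq> A"
  unfolding closed_def using cl_subset by metis

lemma closed_delta_eq_dd: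
  assumes A: "finite A" and F: "closed A R F"
  shows "delta R F = dd A R F"
proof -
  have "cl A R F \<in> tight A R F" by (rule cl_tight[OF A closed_subset[OF F]])
  then show ?thesis using F unfolding closed_def tight_def by simp
qed

section \<open>Counting the sets of R below a closed set\<close>

(* beta(G) counts the sets r \<in> R whose closure is G, via the bijection t. *)
lemma beta_eq_card_fibre:
  assumes A: "finite A" and S: "set_system A R" and T: "transversal A R t"
    and image: "t ` R = A - Y" and G: "closed A R G"
  shows "beta A R t Y G = card {r\<in>R. cl A R r = G}"
proof -
  have inj: "inj_on t R" and t_in: "\<And>r. r \<in> R \<Longrightarrow> t r \<in> r"
    using T unfolding transversal_def by auto
  have rA: "\<And>r. r \<in> R \<Longrightarrow> r \<subseteq> A" using S unfolding set_system_def by auto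
  have inv: "\<And>r. r \<in> R \<Longrightarrow> the_inv_into R t (t r) = r" using the_inv_into_f_f[OF inj] .
  let ?fibre = "{r\<in>R. cl A R r = G}"
  have "t ` ?fibre = {x \<in> G - Y. cl A R (the_inv_into R t x) = G}"
  proof (intro equalityI subsetI)
    fix x assume "x \<in> t ` ?fibre"
    then obtain r where r: "r \<in> R" "cl A R r = G" and x: "x = t r" by blast
    have "x \<in> G" using t_in[OF r(1)] subset_cl[OF A rA[OF r(1)]] r(2) x by blast
    moreover have "x \<notin> Y" using image r(1) x by blast
    moreover have "cl A R (the_inv_into R t x) = G" using inv[OF r(1)] r(2) x by simp
    ultimately show "x \<in> {x \<in> G - Y. cl A R (the_inv_into R t x) = G}" by blast
  next
    fix x assume x: "x \<in> {x \<in> G - Y. cl A R (the_inv_into R t x) = G}"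
    then have "x \<in> t ` R" using image closed_subset[OF G] by blast
    then obtain r where r: "r \<in> R" and "x = t r" by blast
    then show "x \<in> t ` ?fibre" using x inv[OF r] by auto
  qed
  moreover have "inj_on t ?fibre" by (rule inj_on_subset[OF inj]) auto
  ultimately show ?thesis unfolding beta_def by (simp add: card_image[symmetric])
qed

lemma card_relsIn_closed:
  assumes A: "finite A" and S: "set_system A R" and T: "transversal A R t"
    and image: "t ` R = A - Y" and F: "closed A R F"
  shows "card (relsIn R F) = (\<Sum>G\<in>{G. G \<subseteq> F \<and> closed A R G}. beta A R t Y G)"
proof -
  have rA: "\<And>r. r \<in> R \<Longrightarrow> r \<subseteq> A" using S unfolding set_system_def by auto
  have FA: "F \<subseteq> A" by (rule closed_subset[OF F])
  then have finF: "finite F" using A finite_subset by blast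
  have finG: "finite {G. G \<subseteq> F \<and> closed A R G}"
    by (rule finite_subset[of _ "Pow F"]) (auto simp: finF)
  have closures: "cl A R ` relsIn R F \<subseteq> {G. G \<subseteq> F \<and> closed A R G}"
  proof
    fix G assume "G \<in> cl A R ` relsIn R F"
    then obtain r where r: "r \<in> R" "r \<subseteq> F" and G: "G = cl A R r"
      unfolding relsIn_def by blast
    have "G \<subseteq> F" using cl_mono[OF A r(2) FA, of R] F G unfolding closed_def by simp
    moreover have "closed A R G" using closed_cl[OF A rA[OF r(1)]] G by simp
    ultimately show "G \<in> {G. G \<subseteq> F \<and> closed A R G}" by simp
  qed
  have fibre: "{r\<in>relsIn R F. cl A R r = G} = {r\<in>R. cl A R r = G}"
    if "G \<subseteq> F" for G
    using that subset_cl[OF A rA] unfolding relsIn_def by blast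
  have "card (relsIn R F)
        = (\<Sum>G\<in>{G. G \<subseteq> F \<and> closed A R G}. card {r\<in>relsIn R F. cl A R r = G})"
    using card_eq_sum sum.group[OF finite_relsIn[OF finF] finG closures, of "\<lambda>_. 1::nat"]
    by simp
  also have "\<dots> = (\<Sum>G\<in>{G. G \<subseteq> F \<and> closed A R G}. beta A R t Y G)"
    using fibre beta_eq_card_fibre[OF A S T image] by (intro sum.cong) auto
  finally show ?thesis .
qed

theorem mainTheorem5:
  fixes A :: "'a set" and R :: "'a set set" and t :: "'a set \<Rightarrow> 'a" and Y :: "'a set"
  assumes "classC A R"
    and "transversal A R t"
    and "t ` R = A - Y"
  shows "\<forall>F. closed A R F \<longrightarrow> int (beta A R t Y F) = alpha A R F"
proof -
  have A: "finite A" and S: "set_system A R" using assms(1) unfolding classC_def by auto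
  have "int (beta A R t Y F) = alpha A R F" if "closed A R F" for F
    using that
  proof (induction "card F" arbitrary: F rule: less_induct)
    case less
    have finF: "finite F" using finite_subset[OF closed_subset[OF less.prems] A] .
    let ?below = "{G. G \<subset> F \<and> closed A R G}"
    have IH: "alpha A R G = int (beta A R t Y G)" if "G \<in> ?below" for G
      using less.hyps[of G] psubset_card_mono[OF finF] that by simp
    have "{G. G \<subseteq> F \<and> closed A R G} = insert F ?below" using less.prems by auto
    moreover have "finite ?below" by (rule finite_subset[of _ "Pow F"]) (auto simp: finF)
    ultimately have "int (card (relsIn R F))
                     = int (beta A R t Y F) + (\<Sum>G\<in>?below. int (beta A R t Y G))"
      using card_relsIn_closed[OF A S assms(2,3) less.prems] by simp
    moreover have "alpha A R F = int (card F) - dd A R F - (\<Sum>G\<in>?below. alpha A R G)"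
      using finF by (simp only: alpha.simps[of A R F] if_True)
    moreover have "int (card F) - dd A R F = int (card (relsIn R F))"
      using closed_delta_eq_dd[OF A less.prems] unfolding delta_def by simp
    moreover have "(\<Sum>G\<in>?below. alpha A R G) = (\<Sum>G\<in>?below. int (beta A R t Y G))"
      using IH by (rule sum.cong[OF refl])
    ultimately show ?case by linarith
  qed
  then show ?thesis by blast
qed

end
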